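(* Let $p$ be a prime and $k$ a positive integer. Let $A,B,K\in\mathbb{Z}[x,y]$ be homogeneous polynomials with $K^r=\gcd(A^3,B^2)$ for some positive integer $r$, let $R=\mathrm{Res}(A^3/K^r,B^2/K^r)$, and let $\nu(k)=\max\{\lceil 12k/r\rceil,v_p(R)\}$. Let $\mathcal{U}=\{(a,b)\in\mathbb{Z}^2:p^{4k}\mid A(a,b),\ p^{6k}\mid B(a,b)\}$. If $(a_1,b_1)\in\mathcal{U}$ and $\gcd(a_1,b_1,p)=1$, then $(a_1+p^{\nu(k)}\mathbb{Z})\times(b_1+p^{\nu(k)}\mathbb{Z})\subseteq\mathcal{U}$.
   Context: $\gcd(F,G)$ denotes the polynomial with integer coefficients of highest possible degree and smallest possible positive leading coefficient (lexicographic ordering) dividing both $F$ and $G$ in $\mathbb{Q}[x,y]$. $\mathrm{Res}$ is the resultant of homogeneous binary forms. *)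

theory Defs
  imports Complex_Main "HOL-Computational_Algebra.Polynomial" "Subresultants.Resultant_Prelim"
    "HOL-Library.Extended_Nat"
begin

text \<open>Bivariate polynomials in x and y are represented as elements of type
  'a poly poly: the OUTER variable is x, the INNER variable is y.
  So coeff (coeff P i) j is the coefficient of x^i y^j.\<close>

definition eval2 :: "'a::comm_semiring_1 poly poly \<Rightarrow> 'a \<Rightarrow> 'a \<Rightarrow> 'a" where
  "eval2 P a b = poly (map_poly (\<lambda>q. poly q b) P) a"

definition homogeneous2 :: "'a::zero poly poly \<Rightarrow> bool" where
  "homogeneous2 P \<longleftrightarrow> (\<exists>d. \<forall>i j. coeff (coeff P i) j \<noteq> 0 \<longrightarrow> i + j = d)"

definition tdeg2 :: "'a::zero poly poly \<Rightarrow> nat" where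
  "tdeg2 P = Max ({i + j | i j. coeff (coeff P i) j \<noteq> 0} \<union> {0})"

text \<open>Leading coefficient w.r.t. the lexicographic order with x > y.\<close>
definition lex_lc2 :: "'a::zero poly poly \<Rightarrow> 'a" where
  "lex_lc2 P = lead_coeff (lead_coeff P)"

definition to_rat2 :: "int poly poly \<Rightarrow> rat poly poly" where
  "to_rat2 P = map_poly (map_poly rat_of_int) P"

definition dvd_Q2 :: "int poly poly \<Rightarrow> int poly poly \<Rightarrow> bool" where
  "dvd_Q2 E F \<longleftrightarrow> to_rat2 E dvd to_rat2 F"

text \<open>The paper's gcd: D is an integer polynomial dividing F and G in Q[x,y],
  of highest possible degree among such, and with the smallest possible
  positive (lexicographic) leading coefficient among those.\<close>
definition is_gcd2 :: "int poly poly \<Rightarrow> int poly poly \<Rightarrow> int poly poly \<Rightarrow> bool" where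
  "is_gcd2 F G D \<longleftrightarrow>
     dvd_Q2 D F \<and> dvd_Q2 D G \<and>
     (\<forall>E. dvd_Q2 E F \<and> dvd_Q2 E G \<longrightarrow> tdeg2 E \<le> tdeg2 D) \<and>
     lex_lc2 D > 0 \<and>
     (\<forall>E. dvd_Q2 E F \<and> dvd_Q2 E G \<and> tdeg2 E = tdeg2 D \<and> lex_lc2 E > 0
        \<longrightarrow> lex_lc2 D \<le> lex_lc2 E)"

definition dehom2 :: "'a::comm_semiring_1 poly poly \<Rightarrow> 'a poly" where
  "dehom2 P = map_poly (\<lambda>q. poly q 1) P"

text \<open>Resultant of homogeneous binary forms (of their total degrees),
  as the determinant of the Sylvester matrix of the coefficient vectors.\<close>
definition res_form :: "int poly poly \<Rightarrow> int poly poly \<Rightarrow> int" where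
  "res_form F G = resultant_sub (tdeg2 F) (tdeg2 G) (dehom2 F) (dehom2 G)"

definition vp :: "int \<Rightarrow> int \<Rightarrow> enat" where
  "vp p n = (if n = 0 then \<infinity> else enat (multiplicity p n))"

text \<open>x \<in> x1 + p^nu Z, with p^infinity Z = {0}.\<close>
definition in_coset :: "int \<Rightarrow> enat \<Rightarrow> int \<Rightarrow> int \<Rightarrow> bool" where
  "in_coset p nu x1 x \<longleftrightarrow> (\<forall>n::nat. enat n \<le> nu \<longrightarrow> p ^ n dvd (x - x1))"

end

theory Submission
  imports Defs "HOL-Computational_Algebra.Polynomial_Factorial" "HOL-Number_Theory.Cong"
begin

text \<open>
  Write A^3 = K^r A' and B^2 = K^r B', so that (a, b) lies in U iff p^(12k) divides both
  K(a,b)^r A'(a,b) and K(a,b)^r B'(a,b), and let (x, y) be congruent to (a1, b1) modulo p^nu.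
  Put c = ceil(12k/r). If p^c divides K(a1,b1), it divides K(x,y), and K(x,y)^r alone absorbs
  p^(12k). Otherwise mu = v_p(K(a1,b1)) < c, so p^mu divides K(x,y), and p^s with s = 12k - r mu
  divides both A'(a1,b1) and B'(a1,b1). Applied to the vector of monomials a^(m+n-1-j) b^j, the
  Sylvester matrix of two forms of degrees m, n gives multiples of their values at (a, b);
  multiplying by the adjugate, p^s divides R a1^(m+n-1) and R b1^(m+n-1), hence R itself, as p
  does not divide both a1 and b1. So s <= v_p(R) <= nu, and p^s divides A'(x,y) and B'(x,y).

  That A' and B' have integer coefficients is Gauss's lemma: the minimality of the leading
  coefficient of the gcd forces K^r to be primitive.
\<close>

section \<open>Evaluation and homogeneous forms\<close>

lemma eval2_mult: "eval2 (P * Q) a b = eval2 P a b * eval2 Q a (b::'a::comm_ring_1)"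
proof -
  interpret map_poly_comm_ring_hom "\<lambda>q. poly q b" ..
  show ?thesis unfolding eval2_def by (simp add: hom_mult)
qed

lemma eval2_power: "eval2 (P ^ n) a b = eval2 P a (b::'a::comm_ring_1) ^ n"
  by (induction n) (simp_all add: eval2_mult, simp add: eval2_def)

lemma cong_poly:
  fixes f g :: "'a::unique_euclidean_ring poly"
  assumes "\<And>i. [coeff f i = coeff g i] (mod M)" and "[x = y] (mod M)"
  shows "[poly f x = poly g y] (mod M)"
  using assms(1)
proof (induction f g rule: poly_induct2)
  case (pCons a f b g)
  have "[a = b] (mod M)" using pCons.prems[of 0] by simp
  moreover have "[poly f x = poly g y] (mod M)"
    using pCons.prems[of "Suc _"] by (intro pCons.IH) simp
  ultimately show ?case by (simp add: cong_add cong_mult assms(2))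
qed simp

lemma cong_eval2:
  fixes P :: "'a::unique_euclidean_ring poly poly"
  assumes "[a = a'] (mod M)" and "[b = b'] (mod M)"
  shows "[eval2 P a b = eval2 P a' b'] (mod M)"
  unfolding eval2_def using assms by (intro cong_poly) (simp_all add: coeff_map_poly cong_poly)

lemma dvd_eval2_cong:
  fixes P :: "'a::unique_euclidean_ring poly poly"
  assumes "[x = a] (mod M)" and "[y = b] (mod M)" and "D dvd M" and "D dvd eval2 P a b"
  shows "D dvd eval2 P x y"
  using cong_eval2[OF cong_dvd_modulus[OF assms(1,3)] cong_dvd_modulus[OF assms(2,3)], of P]
    assms(4) cong_dvd_iff by blast

definition homogeneous2_deg :: "nat \<Rightarrow> 'a::zero poly poly \<Rightarrow> bool" where
  "homogeneous2_deg d P \<longleftrightarrow> (\<forall>i j. coeff (coeff P i) j \<noteq> 0 \<longrightarrow> i + j = d)"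

lemma homogeneous2_iff_deg: "homogeneous2 P \<longleftrightarrow> (\<exists>d. homogeneous2_deg d P)"
  unfolding homogeneous2_def homogeneous2_deg_def ..

text \<open>\<open>scale2 P = P(2x, 2y)\<close>: the forms of degree \<open>d\<close> are exactly the solutions of
  \<open>P(2x, 2y) = 2\<^sup>d P(x, y)\<close>, an identity that survives products and exact quotients.\<close>

definition scale2 :: "'a::comm_semiring_1 poly poly \<Rightarrow> 'a poly poly" where
  "scale2 P = pcompose (map_poly (\<lambda>q. pcompose q [:0, 2:]) P) [:0, [:2:]:]"

lemma coeff_scale2: "coeff (coeff (scale2 P) i) j = 2 ^ (i + j) * coeff (coeff P i) j"
proof -
  have "coeff (scale2 P) i = [:2:] ^ i * pcompose (coeff P i) [:0, 2:]"
    unfolding scale2_def by (subst coeff_pcompose_linear) (simp add: coeff_map_poly)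
  then show ?thesis by (simp add: poly_const_pow coeff_pcompose_linear power_add mult.assoc)
qed

lemma scale2_mult: "scale2 (P * Q) = scale2 P * scale2 (Q :: 'a::comm_ring_1 poly poly)"
proof -
  interpret map_poly_comm_ring_hom "\<lambda>q :: 'a poly. pcompose q [:0, 2:]" ..
  show ?thesis unfolding scale2_def by (simp add: hom_mult pcompose_mult)
qed

lemma scale2_power: "scale2 (P ^ n) = scale2 (P :: 'a::comm_ring_1 poly poly) ^ n"
  by (induction n) (simp_all add: scale2_mult, simp add: scale2_def)

lemma homogeneous2_deg_iff_scale2:
  "homogeneous2_deg d P \<longleftrightarrow> scale2 P = smult [:2 ^ d:] (P :: 'a::linordered_idom poly poly)"
proof -
  have "scale2 P = smult [:2 ^ d:] P \<longleftrightarrow>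
      (\<forall>i j. 2 ^ (i + j) * coeff (coeff P i) j = 2 ^ d * coeff (coeff P i) j)"
    by (simp add: poly_eq_iff coeff_scale2)
  also have "\<dots> \<longleftrightarrow> homogeneous2_deg d P"
    unfolding homogeneous2_deg_def by auto
  finally show ?thesis ..
qed

lemma homogeneous2_deg_power:
  "homogeneous2_deg d P \<Longrightarrow> homogeneous2_deg (n * d) (P ^ n :: 'a::linordered_idom poly poly)"
  by (simp add: homogeneous2_deg_iff_scale2 scale2_power smult_power poly_const_pow power_mult
      mult.commute)

lemma homogeneous2_deg_quotient:
  fixes D Q :: "'a::linordered_idom poly poly"
  assumes "homogeneous2_deg e D" and "homogeneous2_deg d (D * Q)" and "D \<noteq> 0"
  shows "homogeneous2_deg (d - e) Q"
proof -
  have "D * smult [:2 ^ e:] (scale2 Q) = D * smult [:2 ^ d:] Q"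
    using assms(1,2) by (simp add: homogeneous2_deg_iff_scale2 scale2_mult)
  then have scaled: "smult [:2 ^ e:] (scale2 Q) = smult [:2 ^ d:] Q"
    using assms(3) mult_left_cancel by blast
  show ?thesis unfolding homogeneous2_deg_def
  proof (intro allI impI)
    fix i j assume "coeff (coeff Q i) j \<noteq> 0"
    moreover have "2 ^ e * (2 ^ (i + j) * coeff (coeff Q i) j) = 2 ^ d * coeff (coeff Q i) j"
      using arg_cong[OF scaled, of "\<lambda>X. coeff (coeff X i) j"] by (simp add: coeff_scale2)
    ultimately have "(2::'a) ^ (e + (i + j)) = 2 ^ d" by (simp add: power_add)
    then show "i + j = d - e" by simp
  qed
qed

lemma homogeneous2_deg_tdeg2:
  assumes "homogeneous2_deg d P" shows "homogeneous2_deg (tdeg2 P) P"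
proof (cases "P = 0")
  case False
  then obtain i where "coeff P i \<noteq> 0" by (metis leading_coeff_0_iff)
  then obtain j where "coeff (coeff P i) j \<noteq> 0" by (metis leading_coeff_0_iff)
  with assms have "{i + j | i j. coeff (coeff P i) j \<noteq> 0} = {d}"
    unfolding homogeneous2_deg_def by auto
  then show ?thesis using assms unfolding tdeg2_def by simp
qed (simp add: homogeneous2_deg_def)

lemma homogeneous2_power:
  "homogeneous2 P \<Longrightarrow> homogeneous2 (P ^ n :: 'a::linordered_idom poly poly)"
  using homogeneous2_deg_power by (auto simp: homogeneous2_iff_deg)

lemma homogeneous2_deg_div:
  fixes F D :: "'a::{linordered_idom, idom_divide} poly poly"
  assumes "homogeneous2 F" and "homogeneous2 D" and "D dvd F"
  shows "homogeneous2_deg (tdeg2 (F div D)) (F div D)"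
proof (cases "D = 0")
  case False
  obtain d e where "homogeneous2_deg d F" and "homogeneous2_deg e D"
    using assms(1,2) by (auto simp: homogeneous2_iff_deg)
  moreover have "F = D * (F div D)" using assms(3) by simp
  ultimately have "homogeneous2_deg (d - e) (F div D)"
    using homogeneous2_deg_quotient False by metis
  then show ?thesis by (rule homogeneous2_deg_tdeg2)
qed (simp add: homogeneous2_deg_def)

lemma poly_coeff_homogeneous2_deg:
  assumes "homogeneous2_deg d (F :: 'a::comm_semiring_1 poly poly)"
  shows "poly (coeff F i) b = (if i \<le> d then coeff (coeff F i) (d - i) * b ^ (d - i) else 0)"
proof -
  have coeff_F: "coeff F i = (if i \<le> d then monom (coeff (coeff F i) (d - i)) (d - i) else 0)"
  proof (rule poly_eqI)
    fix j
    have "coeff (coeff F i) j \<noteq> 0 \<Longrightarrow> i + j = d"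
      using assms unfolding homogeneous2_deg_def by blast
    then show "coeff (coeff F i) j =
        coeff (if i \<le> d then monom (coeff (coeff F i) (d - i)) (d - i) else 0) j"
      by (cases "i \<le> d"; cases "j = d - i") (auto, metis add_diff_cancel_left')
  qed
  show ?thesis by (subst coeff_F) (simp add: poly_monom)
qed

lemma eval2_homogeneous2_deg:
  assumes "homogeneous2_deg d (F :: 'a::comm_semiring_1 poly poly)"
  shows "eval2 F a b = (\<Sum>t\<le>d. coeff (dehom2 F) t * a ^ t * b ^ (d - t))"
proof -
  let ?G = "map_poly (\<lambda>q. poly q b) F"
  have coeff_G: "coeff ?G t = (if t \<le> d then coeff (dehom2 F) t * b ^ (d - t) else 0)" for t
    using poly_coeff_homogeneous2_deg[OF assms, of t]
    by (simp add: coeff_map_poly dehom2_def)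
  have "degree ?G \<le> d" by (rule degree_le) (intro allI impI, subst coeff_G, simp)
  then have "eval2 F a b = (\<Sum>t\<le>d. coeff ?G t * a ^ t)"
    unfolding eval2_def poly_altdef by (intro sum.mono_neutral_left) (auto simp: coeff_eq_0)
  also have "\<dots> = (\<Sum>t\<le>d. coeff (dehom2 F) t * a ^ t * b ^ (d - t))"
    by (intro sum.cong refl, subst coeff_G) (simp add: ac_simps)
  finally show ?thesis .
qed

section \<open>Resultants of forms\<close>

lemma dvd_det_mult_vec_index:
  fixes S :: "'a::comm_ring_1 mat"
  assumes S: "S \<in> carrier_mat N N" and v: "v \<in> carrier_vec N"
    and dvd: "\<And>j. j < N \<Longrightarrow> M dvd (S *\<^sub>v v) $ j" and i: "i < N"
  shows "M dvd det S * v $ i"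
proof -
  have adj: "adj_mat S \<in> carrier_mat N N" using adj_mat(1)[OF S] .
  have "det S * v $ i = ((adj_mat S * S) *\<^sub>v v) $ i"
    using adj_mat(3)[OF S] i v
    by (simp add: scalar_prod_def mult.assoc flip: of_bool_def sum_distrib_left)
  also have "\<dots> = (\<Sum>j<N. adj_mat S $$ (i, j) * (S *\<^sub>v v) $ j)"
    using adj S v i by (simp add: scalar_prod_def lessThan_atLeast0)
  also have "M dvd \<dots>" using dvd by (intro dvd_sum dvd_mult) auto
  finally show ?thesis .
qed

lemma band_sum_homogeneous2_deg:
  fixes H :: "'a::comm_semiring_1 poly poly"
  assumes "homogeneous2_deg L H" and "L \<le> s" and "s < N"
  shows "(\<Sum>j<N. (if s - L \<le> j \<and> j \<le> s then coeff (dehom2 H) (s - j) else 0)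
            * (a ^ (N - 1 - j) * b ^ j))
       = a ^ (N - 1 - s) * b ^ (s - L) * eval2 H a b"
proof -
  have "(\<Sum>j<N. (if s - L \<le> j \<and> j \<le> s then coeff (dehom2 H) (s - j) else 0)
            * (a ^ (N - 1 - j) * b ^ j))
      = (\<Sum>j\<in>{s - L..s}. coeff (dehom2 H) (s - j) * (a ^ (N - 1 - j) * b ^ j))"
    using assms(2,3) by (intro sum.mono_neutral_cong_right) auto
  also have "\<dots> = (\<Sum>t\<le>L. a ^ (N - 1 - s) * b ^ (s - L)
      * (coeff (dehom2 H) t * a ^ t * b ^ (L - t)))"
  proof (rule sum.reindex_bij_witness[of _ "\<lambda>t. s - t" "\<lambda>j. s - j"])
    fix j assume "j \<in> {s - L..s}"
    then have "N - 1 - j = (s - j) + (N - 1 - s)" and "j = (L - (s - j)) + (s - L)"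
      using assms(2,3) by auto
    then show "a ^ (N - 1 - s) * b ^ (s - L)
        * (coeff (dehom2 H) (s - j) * a ^ (s - j) * b ^ (L - (s - j)))
        = coeff (dehom2 H) (s - j) * (a ^ (N - 1 - j) * b ^ j)"
      by (metis (no_types, lifting) power_add mult.commute mult.left_commute)
  qed (use assms(2) in auto)
  also have "\<dots> = a ^ (N - 1 - s) * b ^ (s - L) * eval2 H a b"
    by (simp add: eval2_homogeneous2_deg[OF assms(1)] sum_distrib_left)
  finally show ?thesis .
qed

lemma sylvester_mat_sub_mult_vec_powers:
  fixes F G :: "'a::comm_ring_1 poly poly"
  assumes "homogeneous2_deg m F" and "homogeneous2_deg n G" and "i < m + n"
  shows "(sylvester_mat_sub m n (dehom2 F) (dehom2 G)
            *\<^sub>v vec (m + n) (\<lambda>j. a ^ (m + n - 1 - j) * b ^ j)) $ i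
       = (if i < n then a ^ (n - 1 - i) * b ^ i * eval2 F a b
          else a ^ (m + n - 1 - i) * b ^ (i - n) * eval2 G a b)"
proof -
  have "(sylvester_mat_sub m n (dehom2 F) (dehom2 G)
            *\<^sub>v vec (m + n) (\<lambda>j. a ^ (m + n - 1 - j) * b ^ j)) $ i
      = (\<Sum>j<m + n. (if i < n
           then if m + i - m \<le> j \<and> j \<le> m + i then coeff (dehom2 F) (m + i - j) else 0
           else if i - n \<le> j \<and> j \<le> i then coeff (dehom2 G) (i - j) else 0)
         * (a ^ (m + n - 1 - j) * b ^ j))"
    using assms(3) by (auto simp: scalar_prod_def sylvester_mat_sub_index lessThan_atLeast0
        intro!: sum.cong)
  also have "\<dots> = (if i < n then a ^ (n - 1 - i) * b ^ i * eval2 F a b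
          else a ^ (m + n - 1 - i) * b ^ (i - n) * eval2 G a b)"
    using band_sum_homogeneous2_deg[OF assms(1), of "m + i" "m + n"]
      band_sum_homogeneous2_deg[OF assms(2), of i "m + n"] assms(3)
    by (cases "i < n") simp_all
  finally show ?thesis .
qed

lemma dvd_resultant_sub_mult_powers:
  fixes F G :: "'a::comm_ring_1 poly poly"
  assumes "homogeneous2_deg m F" and "homogeneous2_deg n G" and "0 < m + n"
    and "M dvd eval2 F a b" and "M dvd eval2 G a b"
  shows "M dvd resultant_sub m n (dehom2 F) (dehom2 G) * a ^ (m + n - 1)"
    and "M dvd resultant_sub m n (dehom2 F) (dehom2 G) * b ^ (m + n - 1)"
proof -
  let ?S = "sylvester_mat_sub m n (dehom2 F) (dehom2 G)"
  let ?v = "vec (m + n) (\<lambda>j. a ^ (m + n - 1 - j) * b ^ j)"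
  have "M dvd (?S *\<^sub>v ?v) $ j" if "j < m + n" for j
    using sylvester_mat_sub_mult_vec_powers[OF assms(1,2) that] assms(4,5) by simp
  then have "M dvd det ?S * ?v $ i" if "i < m + n" for i
    using that by (intro dvd_det_mult_vec_index[of _ "m + n"] sylvester_mat_sub_carrier) auto
  from this[of 0] this[of "m + n - 1"] assms(3)
  show "M dvd resultant_sub m n (dehom2 F) (dehom2 G) * a ^ (m + n - 1)"
    and "M dvd resultant_sub m n (dehom2 F) (dehom2 G) * b ^ (m + n - 1)"
    by (simp_all add: resultant_sub_def)
qed

section \<open>Gauss's lemma in two variables\<close>

definition content2 :: "int poly poly \<Rightarrow> int" where
  "content2 P = content (content P)"

lemma content2_mult: "content2 (P * Q) = content2 P * content2 Q"
  unfolding content2_def by (simp add: content_mult normalize_const_poly)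

lemma content2_of_int_mult: "content2 (of_int c * P) = \<bar>c\<bar> * content2 P"
  unfolding content2_def by (simp add: of_int_poly content_mult normalize_const_poly)

lemma content2_pos: "P \<noteq> 0 \<Longrightarrow> 0 < content2 P"
  unfolding content2_def
  by (metis content_eq_zero_iff normalize_content abs_ge_zero le_less normalize_int_def)

lemma dvd_content2E:
  assumes "c dvd content2 P"
  obtains Q where "P = of_int c * Q"
proof -
  have "[:c:] dvd content P"
    using assms unfolding content2_def by (simp add: const_poly_dvd_iff_dvd_content)
  then have "[:[:c:]:] dvd [:content P:]" by simp
  also have "\<dots> dvd P" by (rule content_dvd)
  finally show ?thesis using that by (auto simp: of_int_poly)
qed

lemma to_rat2_mult: "to_rat2 (P * Q) = to_rat2 P * to_rat2 Q"
proof -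
  interpret map_poly_comm_ring_hom "map_poly (of_int :: int \<Rightarrow> rat)" ..
  show ?thesis unfolding to_rat2_def by (rule hom_mult)
qed

lemma to_rat2_of_int: "to_rat2 (of_int c) = of_int c"
proof -
  interpret map_poly_comm_ring_hom "map_poly (of_int :: int \<Rightarrow> rat)" ..
  show ?thesis unfolding to_rat2_def by (rule hom_of_int)
qed

lemma to_rat2_inj: "to_rat2 P = to_rat2 Q \<Longrightarrow> P = Q"
proof -
  interpret map_poly_inj_comm_ring_hom "map_poly (of_int :: int \<Rightarrow> rat)" ..
  show "to_rat2 P = to_rat2 Q \<Longrightarrow> P = Q" unfolding to_rat2_def by simp
qed

lemma (in comm_ring_hom) map_poly_clears_denominators:
  assumes "\<And>c. \<exists>d > 0. \<exists>q. hom q = of_int d * c"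
  shows "\<exists>d > 0. \<exists>Q. map_poly hom Q = of_int d * P"
proof (induction P)
  case 0
  show ?case by (intro exI[of _ 1]) (auto intro: exI[of _ 0])
next
  case (pCons c P)
  obtain d Q where "d > 0" and Q: "map_poly hom Q = of_int d * P" using pCons.IH by blast
  obtain e q where "e > 0" and q: "hom q = of_int e * c" using assms by blast
  have "map_poly hom (pCons (of_int d * q) (of_int e * Q)) = of_int (d * e) * pCons c P"
    by (simp add: Q q map_poly_pCons_hom map_poly_hom_smult hom_mult hom_of_int of_int_poly
        algebra_simps)
  then show ?case using \<open>d > 0\<close> \<open>e > 0\<close> by (intro exI[of _ "d * e"]) auto
qed

lemma to_rat2_clears_denominators: "\<exists>d > 0. \<exists>Q. to_rat2 Q = of_int d * P"
proof -
  have "\<exists>d > 0. \<exists>q. of_int q = of_int d * x" for x :: rat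
  proof -
    obtain n d where "quotient_of x = (n, d)" by fastforce
    then have "d > 0" and "x = of_int n / of_int d"
      by (auto simp: quotient_of_denom_pos quotient_of_div)
    then show ?thesis by (intro exI[of _ d]) (auto intro!: exI[of _ n])
  qed
  then have "\<exists>d > 0. \<exists>q. map_poly of_int q = of_int d * c" for c :: "rat poly"
    by (rule of_int_hom.map_poly_clears_denominators)
  then show ?thesis unfolding to_rat2_def by (rule of_int_poly_hom.map_poly_clears_denominators)
qed

lemma dvd_Q2_imp_dvd:
  assumes "dvd_Q2 D F" and "content2 D = 1"
  shows "D dvd F"
proof -
  obtain Qr where "to_rat2 F = to_rat2 D * Qr"
    using assms(1) unfolding dvd_Q2_def by blast
  moreover obtain d Q where "d > 0" and Q: "to_rat2 Q = of_int d * Qr"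
    using to_rat2_clears_denominators by blast
  ultimately have "to_rat2 (of_int d * F) = to_rat2 (D * Q)"
    by (simp add: to_rat2_mult to_rat2_of_int ac_simps)
  then have dF: "of_int d * F = D * Q" by (rule to_rat2_inj)
  then have "d * content2 F = content2 Q"
    using \<open>d > 0\<close> assms(2) by (metis content2_mult content2_of_int_mult abs_of_pos mult_1)
  then obtain Q' where "Q = of_int d * Q'" by (metis dvdI dvd_content2E)
  with dF \<open>d > 0\<close> have "F = D * Q'" by (simp add: mult.left_commute)
  then show ?thesis by simp
qed

lemma is_gcd2_content2:
  assumes "is_gcd2 F G D" shows "content2 D = 1"
proof -
  have lc: "lex_lc2 D > 0" using assms unfolding is_gcd2_def by blast
  then have "D \<noteq> 0" unfolding lex_lc2_def by auto
  define c where "c = content2 D"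
  have "c > 0" using content2_pos[OF \<open>D \<noteq> 0\<close>] c_def by simp
  obtain H where H: "D = of_int c * H" using dvd_content2E[of c D] c_def by auto
  have "to_rat2 H dvd to_rat2 D" by (simp add: H to_rat2_mult)
  then have dvd_H: "dvd_Q2 H X" if "dvd_Q2 D X" for X
    using that unfolding dvd_Q2_def by (rule dvd_trans)
  have coeff_D: "coeff (coeff D i) j = c * coeff (coeff H i) j" for i j
    by (simp add: H of_int_poly)
  then have "tdeg2 H = tdeg2 D" unfolding tdeg2_def using \<open>c > 0\<close> by simp
  moreover have lc_D: "lex_lc2 D = c * lex_lc2 H"
    by (simp add: H of_int_poly lex_lc2_def lead_coeff_mult)
  moreover have "lex_lc2 H > 0" using lc lc_D \<open>c > 0\<close> by (simp add: zero_less_mult_iff)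
  ultimately have "lex_lc2 D \<le> lex_lc2 H"
    using assms dvd_H unfolding is_gcd2_def by blast
  then show ?thesis using lc_D \<open>lex_lc2 H > 0\<close> \<open>c > 0\<close> c_def
    by (metis mult_le_cancel_right2 not_le antisym int_one_le_iff_zero_less)
qed

lemma is_gcd2_dvd:
  assumes "is_gcd2 F G D" shows "D dvd F" and "D dvd G"
  using assms is_gcd2_content2[OF assms] by (auto simp: is_gcd2_def dvd_Q2_imp_dvd)

section \<open>Prime power divisors on residue classes\<close>

lemma prime_power_dvd_all_imp_zero:
  fixes p z :: "'a::factorial_semiring"
  assumes "prime p" and "\<And>n. p ^ n dvd z" shows "z = 0"
proof (rule ccontr)
  assume "z \<noteq> 0"
  have "p ^ Suc (multiplicity p z) dvd z" by (rule assms(2))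
  then have "Suc (multiplicity p z) \<le> multiplicity p z"
    using power_dvd_iff_le_multiplicity[OF \<open>z \<noteq> 0\<close>] assms(1) not_prime_unit by blast
  then show False by simp
qed

lemma prime_power_dvd_power_iff:
  fixes p x :: "'a::factorial_semiring"
  assumes "prime p" and "0 < e"
  shows "p ^ (e * n) dvd x ^ e \<longleftrightarrow> p ^ n dvd x"
proof (cases "x = 0")
  case False
  then have "p ^ (e * n) dvd x ^ e \<longleftrightarrow> e * n \<le> e * multiplicity p x"
    using assms by (simp add: power_dvd_iff_le_multiplicity not_prime_unit
        prime_elem_multiplicity_power_distrib)
  also have "\<dots> \<longleftrightarrow> p ^ n dvd x"
    using assms False by (simp add: power_dvd_iff_le_multiplicity not_prime_unit)
  finally show ?thesis .
qed (use assms in \<open>simp add: power_0_left\<close>)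

lemma prime_power_dvd_mult_imp:
  fixes p K X :: "'a::factorial_semiring"
  assumes "prime p" and "K \<noteq> 0" and "p ^ t dvd K * X"
  shows "p ^ (t - multiplicity p K) dvd X"
proof (cases "X = 0")
  case False
  have "t \<le> multiplicity p (K * X)"
    using assms False by (simp add: power_dvd_iff_le_multiplicity not_prime_unit)
  also have "\<dots> = multiplicity p K + multiplicity p X"
    using assms False by (simp add: prime_elem_multiplicity_mult_distrib)
  finally show ?thesis by (intro multiplicity_dvd') simp
qed simp

lemma in_coset_infinity: "prime p \<Longrightarrow> in_coset p \<infinity> x1 x \<longleftrightarrow> x = x1"
  unfolding in_coset_def using prime_power_dvd_all_imp_zero[of p "x - x1"] by auto

lemma in_coset_enat: "in_coset p (enat N) x1 x \<longleftrightarrow> [x = x1] (mod p ^ N)"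
  unfolding in_coset_def cong_iff_dvd_diff
  by (auto intro: dvd_trans[OF le_imp_power_dvd])

lemma prime_power_dvd_resultant_sub:
  fixes F G :: "int poly poly"
  assumes "prime p" and "homogeneous2_deg m F" and "homogeneous2_deg n G" and "0 < m + n"
    and "\<not> (p dvd a \<and> p dvd b)" and "p ^ s dvd eval2 F a b" and "p ^ s dvd eval2 G a b"
  shows "p ^ s dvd resultant_sub m n (dehom2 F) (dehom2 G)"
proof -
  note dvd_res = dvd_resultant_sub_mult_powers[OF assms(2-4,6,7)]
  consider "coprime (p ^ s) (a ^ (m + n - 1))" | "coprime (p ^ s) (b ^ (m + n - 1))"
    using assms(1,5) by (auto simp: prime_imp_coprime)
  then show ?thesis
    by cases (use dvd_res in \<open>simp_all add: coprime_dvd_mult_left_iff\<close>)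
qed

lemma prime_power_dvd_forms_on_coset:
  fixes F G :: "int poly poly" and m n :: nat
  defines "R \<equiv> resultant_sub m n (dehom2 F) (dehom2 G)"
  assumes "prime p" and "homogeneous2_deg m F" and "homogeneous2_deg n G"
    and "R \<noteq> 0" and "multiplicity p R \<le> N" and "\<not> (p dvd a \<and> p dvd b)"
    and "[x = a] (mod p ^ N)" and "[y = b] (mod p ^ N)"
    and "p ^ s dvd eval2 F a b" and "p ^ s dvd eval2 G a b"
  shows "p ^ s dvd eval2 F x y \<and> p ^ s dvd eval2 G x y"
proof (cases "m + n = 0")
  case True
  then show ?thesis
    using assms(10,11)
    by (simp add: eval2_homogeneous2_deg[OF assms(3)] eval2_homogeneous2_deg[OF assms(4)])
next
  case False
  then have "p ^ s dvd R"
    unfolding R_def using assms(2-4,7,10,11) by (intro prime_power_dvd_resultant_sub) auto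
  then have "s \<le> N"
    using power_dvd_iff_le_multiplicity[OF assms(5)] assms(2,6) not_prime_unit by fastforce
  then show ?thesis
    using assms(8-11) by (auto intro: dvd_eval2_cong le_imp_power_dvd)
qed

lemma prime_power_dvd_cofactor_products_on_coset:
  fixes F G K :: "int poly poly" and m n :: nat
  defines "R \<equiv> resultant_sub m n (dehom2 F) (dehom2 G)"
  assumes "prime p" and "homogeneous2_deg m F" and "homogeneous2_deg n G"
    and "R \<noteq> 0" and "multiplicity p R \<le> N" and "e \<le> c * r" and "c \<le> N"
    and "\<not> (p dvd a \<and> p dvd b)" and "[x = a] (mod p ^ N)" and "[y = b] (mod p ^ N)"
    and "p ^ e dvd eval2 K a b ^ r * eval2 F a b" and "p ^ e dvd eval2 K a b ^ r * eval2 G a b"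
  shows "p ^ e dvd eval2 K x y ^ r * eval2 F x y \<and> p ^ e dvd eval2 K x y ^ r * eval2 G x y"
proof -
  have transfer: "p ^ j dvd eval2 P x y" if "j \<le> N" and "p ^ j dvd eval2 P a b" for j P
    using assms(10,11) that by (auto intro: dvd_eval2_cong le_imp_power_dvd)
  show ?thesis
  proof (cases "p ^ c dvd eval2 K a b")
    case True
    then have "p ^ (c * r) dvd eval2 K x y ^ r"
      using transfer[OF assms(8)] by (simp add: power_mult dvd_power_same)
    moreover have "p ^ e dvd p ^ (c * r)" using assms(7) by (rule le_imp_power_dvd)
    ultimately show ?thesis by (auto intro: dvd_trans)
  next
    case False
    then have "eval2 K a b \<noteq> 0" by auto
    define \<mu> where "\<mu> = multiplicity p (eval2 K a b)"
    have "\<mu> \<le> c"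
      using multiplicity_lessI[OF \<open>eval2 K a b \<noteq> 0\<close> _ False] assms(2) not_prime_unit
      unfolding \<mu>_def by fastforce
    have "p ^ \<mu> dvd eval2 K x y"
      using transfer \<open>\<mu> \<le> c\<close> assms(8) multiplicity_dvd unfolding \<mu>_def by (meson order_trans)
    then have K_xy: "p ^ (r * \<mu>) dvd eval2 K x y ^ r"
      by (simp add: mult.commute[of r] power_mult dvd_power_same)
    have mult_K: "multiplicity p (eval2 K a b ^ r) = r * \<mu>"
      using prime_elem_multiplicity_power_distrib[OF prime_imp_prime_elem[OF assms(2)]
          \<open>eval2 K a b \<noteq> 0\<close>]
      unfolding \<mu>_def .
    have "eval2 K a b ^ r \<noteq> 0" using \<open>eval2 K a b \<noteq> 0\<close> by simp
    from prime_power_dvd_mult_imp[OF assms(2) this assms(12)]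
      prime_power_dvd_mult_imp[OF assms(2) this assms(13)]
    have "p ^ (e - r * \<mu>) dvd eval2 F a b" and "p ^ (e - r * \<mu>) dvd eval2 G a b"
      unfolding mult_K .
    then have "p ^ (e - r * \<mu>) dvd eval2 F x y \<and> p ^ (e - r * \<mu>) dvd eval2 G x y"
      using assms(2-6,9-11) unfolding R_def by (intro prime_power_dvd_forms_on_coset) auto
    moreover have "p ^ e dvd p ^ (r * \<mu>) * p ^ (e - r * \<mu>)"
      by (simp add: le_imp_power_dvd flip: power_add)
    ultimately show ?thesis using K_xy by (meson dvd_trans mult_dvd_mono)
  qed
qed

lemma le_nat_ceiling_div_mult:
  assumes "0 < r" shows "m \<le> nat \<lceil>real m / real r\<rceil> * r"
proof -
  define c where "c = nat \<lceil>real m / real r\<rceil>"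
  have "real m / real r \<le> real c" unfolding c_def by linarith
  then have "real m \<le> real c * real r" using assms by (simp add: field_simps)
  then show ?thesis unfolding c_def[symmetric] by (simp flip: of_nat_mult)
qed

theorem lemma4p6:
  fixes p :: int and k r :: nat and A B K :: "int poly poly" and a1 b1 :: int
  assumes "prime p" and "k > 0" and "r > 0"
    and "homogeneous2 A" and "homogeneous2 B" and "homogeneous2 K"
    and "is_gcd2 (A ^ 3) (B ^ 2) (K ^ r)"
  defines "R \<equiv> res_form (A ^ 3 div K ^ r) (B ^ 2 div K ^ r)"
  defines "\<nu> \<equiv> max (enat (nat \<lceil>real (12 * k) / real r\<rceil>)) (vp p R)"
  defines "\<U> \<equiv> {(a::int, b::int). p ^ (4 * k) dvd eval2 A a b \<and> p ^ (6 * k) dvd eval2 B a b}"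
  assumes "(a1, b1) \<in> \<U>" and "gcd (gcd a1 b1) p = 1"
  shows "{a. in_coset p \<nu> a1 a} \<times> {b. in_coset p \<nu> b1 b} \<subseteq> \<U>"
proof -
  define A' B' where "A' = A ^ 3 div K ^ r" and "B' = B ^ 2 div K ^ r"
  have "K ^ r dvd A ^ 3" and "K ^ r dvd B ^ 2" using is_gcd2_dvd[OF assms(7)] by auto
  then have hom: "homogeneous2_deg (tdeg2 A') A'" "homogeneous2_deg (tdeg2 B') B'"
    using assms(4-6) by (simp_all add: A'_def B'_def homogeneous2_deg_div homogeneous2_power)
  have U_iff: "(x, y) \<in> \<U> \<longleftrightarrow> p ^ (12 * k) dvd eval2 K x y ^ r * eval2 A' x y
      \<and> p ^ (12 * k) dvd eval2 K x y ^ r * eval2 B' x y" for x y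
    using \<open>K ^ r dvd A ^ 3\<close> \<open>K ^ r dvd B ^ 2\<close>
      prime_power_dvd_power_iff[OF assms(1), of 3 "4 * k" "eval2 A x y"]
      prime_power_dvd_power_iff[OF assms(1), of 2 "6 * k" "eval2 B x y"]
    by (simp add: A'_def B'_def \<U>_def flip: eval2_power eval2_mult)
  have primitive: "\<not> (p dvd a1 \<and> p dvd b1)"
    using assms(1,12) by (metis gcd_greatest dvd_refl not_prime_unit)
  have R: "R = resultant_sub (tdeg2 A') (tdeg2 B') (dehom2 A') (dehom2 B')"
    unfolding R_def res_form_def A'_def B'_def ..
  show ?thesis
  proof (cases "R = 0")
    case False
    define N where "N = max (nat \<lceil>real (12 * k) / real r\<rceil>) (multiplicity p R)"
    have "\<nu> = enat N" using False by (simp add: \<nu>_def vp_def N_def)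
    show ?thesis
    proof clarify
      fix x y assume "in_coset p \<nu> a1 x" and "in_coset p \<nu> b1 y"
      then have "[x = a1] (mod p ^ N)" and "[y = b1] (mod p ^ N)"
        by (simp_all add: \<open>\<nu> = enat N\<close> in_coset_enat)
      then show "(x, y) \<in> \<U>"
        using assms(11) le_nat_ceiling_div_mult[OF assms(3), of "12 * k"] unfolding U_iff
        by (intro prime_power_dvd_cofactor_products_on_coset[OF assms(1) hom False[unfolded R]
              _ _ _ primitive]) (auto simp: N_def R)
    qed
  qed (use assms(1,11) in \<open>auto simp: \<nu>_def vp_def in_coset_infinity\<close>)
qed

end
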